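(* $\mathrm{Sort}(\mathrm{SC}_{1\underline{23}})$ is a permutation class.
   Context: $\mathfrak S_n$ is the set of permutations of $\{1,\dots,n\}$. A permutation $\pi$ contains a (classical) permutation $\tau$ if some subsequence of $\pi$ has the same relative order as $\tau$. A permutation class is a set $\Pi$ of permutations such that every permutation contained in some $\pi\in\Pi$ is also in $\Pi$. A vincular pattern is a permutation with some entries underlined; a sequence contains it if it has a subsequence with the same relative order in which entries corresponding to adjacent underlined entries occupy consecutive positions. An occurrence of $1\underline{23}$ is $a_i a_j a_{j+1}$ with $i<j$ and $a_i<a_j<a_{j+1}$. For a pattern $\sigma$, the map $\mathrm{SC}_\sigma$ acts on $\tau$: read entries left to right; when the next entry $x$ is read, if pushing $x$ yields a stack whose entries read top to bottom (stack adjacency = consecutive positions) avoid $\sigma$, push $x$; otherwise pop the top stack entry to the output and repeat. At the end pop all remaining entries; the output is $\mathrm{SC}_\sigma(\tau)$. West's stack-sorting map is $s=\mathrm{SC}_{21}$. $\mathrm{Sort}_n(\mathrm{SC}_\sigma)=\{\tau\in\mathfrak S_n : s(\mathrm{SC}_\sigma(\tau))=12\cdots n\}$ and $\mathrm{Sort}(\mathrm{SC}_\sigma)=\bigcup_{n\ge1}\mathrm{Sort}_n(\mathrm{SC}_\sigma)$. *)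

theory Defs
  imports Main
begin

definition is_perm :: "nat list \<Rightarrow> bool" where
  "is_perm p \<longleftrightarrow> p \<noteq> [] \<and> distinct p \<and> set p = {1..length p}"

definition perms :: "nat \<Rightarrow> nat list set" where
  "perms n = {p. is_perm p \<and> length p = n}"

text \<open>Occurrence of a vincular pattern: the pattern is a list tau; adj is the set of
  positions k (0-based) such that entries k and k+1 of the pattern are underlined together,
  i.e. must occupy consecutive positions.\<close>
definition occurs_vinc :: "nat list \<Rightarrow> nat set \<Rightarrow> nat list \<Rightarrow> bool" where
  "occurs_vinc tau adj a \<longleftrightarrow>
     (\<exists>idx :: nat list. length idx = length tau \<and> sorted_wrt (<) idx \<and>
        (\<forall>k<length idx. idx ! k < length a) \<and>
        (\<forall>k<length tau. \<forall>l<length tau. tau ! k < tau ! l \<longleftrightarrow> a ! (idx ! k) < a ! (idx ! l)) \<and>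
        (\<forall>k. k \<in> adj \<longrightarrow> Suc k < length tau \<longrightarrow> idx ! Suc k = Suc (idx ! k)))"

definition contains :: "nat list \<Rightarrow> nat list \<Rightarrow> bool" where
  "contains pi tau \<longleftrightarrow> occurs_vinc tau {} pi"

definition perm_class :: "nat list set \<Rightarrow> bool" where
  "perm_class P \<longleftrightarrow> (\<forall>p\<in>P. is_perm p) \<and>
     (\<forall>p\<in>P. \<forall>t. is_perm t \<and> contains p t \<longrightarrow> t \<in> P)"

text \<open>The stack is a list whose head is the top, so the
  list itself is the stack read top to bottom. Pushing onto an empty stack is always allowed
  (a one-element stack avoids every pattern of length at least 2).\<close>
function sc_aux :: "nat list \<Rightarrow> nat set \<Rightarrow> nat list \<Rightarrow> nat list \<Rightarrow> nat list" where
  "sc_aux tau adj [] st = st"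
| "sc_aux tau adj (x # xs) st =
     (if st = [] \<or> \<not> occurs_vinc tau adj (x # st) then sc_aux tau adj xs (x # st)
      else hd st # sc_aux tau adj (x # xs) (tl st))"
  by pat_completeness auto
termination
  by (relation "measure (\<lambda>(tau, adj, xs, st). 2 * length xs + length st)") auto

definition SC :: "nat list \<Rightarrow> nat set \<Rightarrow> nat list \<Rightarrow> nat list" where
  "SC tau adj p = sc_aux tau adj p []"

definition west_s :: "nat list \<Rightarrow> nat list" where
  "west_s p = SC [2,1] {} p"

definition Sort_n :: "nat list \<Rightarrow> nat set \<Rightarrow> nat \<Rightarrow> nat list set" where
  "Sort_n tau adj n = {p \<in> perms n. west_s (SC tau adj p) = [1..<n+1]}"

definition Sort :: "nat list \<Rightarrow> nat set \<Rightarrow> nat list set" where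
  "Sort tau adj = (\<Union>n\<in>{1..}. Sort_n tau adj n)"

abbreviation pat_1_23 :: "nat list" where "pat_1_23 \<equiv> [1,2,3]"
abbreviation adj_1_23 :: "nat set" where "adj_1_23 \<equiv> {1}"

end

theory Submission
  imports Defs "HOL-Library.Multiset"
begin

(* Sort(SC_{1_23}) is the set of permutations avoiding 132, 3214 and 4213; being defined by
   avoidance of classical patterns, it is closed under containment because containment is
   transitive.  By West, s(w) is the identity iff w avoids 231, so one has to show that
   SC_{1_23}(p) contains 231 exactly when p contains one of the three patterns.  As long as the prefix read avoids the three patterns, the stack
   (top to bottom) is U @ V with U and V decreasing and last U < hd V, the output so far
   followed by U is decreasing, and none of it lies between last V and hd V; hence output
   followed by stack avoids 231.  The first entry that completes one of the three patterns
   produces a 231 in output followed by stack, and as later entries are only inserted into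
   this word, the 231 survives into SC_{1_23}(p). *)

section \<open>Relative position of entries in a list\<close>

fun precedes :: "'a list \<Rightarrow> 'a \<Rightarrow> 'a \<Rightarrow> bool" where
  "precedes [] u v \<longleftrightarrow> False"
| "precedes (x # xs) u v \<longleftrightarrow> (u = x \<and> v \<in> set xs) \<or> precedes xs u v"

lemma precedes_setD:
  assumes "precedes w u v" shows "u \<in> set w" "v \<in> set w"
  using assms by (induction w) auto

lemma precedes_append:
  "precedes (xs @ ys) u v \<longleftrightarrow> precedes xs u v \<or> precedes ys u v \<or> (u \<in> set xs \<and> v \<in> set ys)"
  by (induction xs) (auto dest: precedes_setD)

lemma precedes_snoc:
  "x \<notin> set xs \<Longrightarrow> precedes (xs @ [x]) u v \<longleftrightarrow> precedes xs u v \<or> (u \<in> set xs \<and> v = x)"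
  by (simp add: precedes_append)

lemma precedes_append_left: "precedes (xs @ ys) u v \<Longrightarrow> v \<notin> set ys \<Longrightarrow> precedes xs u v"
  by (auto simp: precedes_append dest: precedes_setD)

lemma precedes_append_right: "precedes (xs @ ys) u v \<Longrightarrow> u \<notin> set xs \<Longrightarrow> precedes ys u v"
  by (auto simp: precedes_append dest: precedes_setD)

lemma precedes_rev: "precedes (rev xs) u v \<longleftrightarrow> precedes xs v u"
  by (induction xs) (auto simp: precedes_append dest: precedes_setD)

lemma sorted_wrt_precedes: "sorted_wrt R xs \<Longrightarrow> precedes xs u v \<Longrightarrow> R u v"
  by (induction xs) auto

lemma precedes_trans:
  "distinct xs \<Longrightarrow> precedes xs u v \<Longrightarrow> precedes xs v z \<Longrightarrow> precedes xs u z"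
  by (induction xs) (auto dest: precedes_setD)

lemma precedes_nth: "i < j \<Longrightarrow> j < length xs \<Longrightarrow> precedes xs (xs ! i) (xs ! j)"
proof (induction xs arbitrary: i j)
  case (Cons x xs)
  then obtain j' where "j = Suc j'" by (cases j) auto
  with Cons show ?case by (cases i) auto
qed simp

lemma precedesE:
  assumes "precedes xs u v"
  obtains i j where "i < j" "j < length xs" "xs ! i = u" "xs ! j = v"
  using assms
proof (induction xs arbitrary: thesis)
  case (Cons x xs)
  show ?case
  proof (cases "precedes xs u v")
    case True
    then show ?thesis using Cons.IH[of thesis] Cons.prems(1)[of "Suc _" "Suc _"] by auto
  next
    case False
    then obtain j where "j < length xs" "xs ! j = v" "u = x"
      using Cons.prems(2) by (auto simp: in_set_conv_nth)
    then show ?thesis using Cons.prems(1)[of 0 "Suc j"] by auto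
  qed
qed simp

lemma precedes_nth_iff:
  assumes "distinct xs" "i < length xs" "j < length xs"
  shows "precedes xs (xs ! i) (xs ! j) \<longleftrightarrow> i < j"
proof
  assume "precedes xs (xs ! i) (xs ! j)"
  then obtain i' j' where "i' < j'" "j' < length xs" "xs ! i' = xs ! i" "xs ! j' = xs ! j"
    by (rule precedesE)
  with assms show "i < j" by (simp add: nth_eq_iff_index_eq)
qed (use assms precedes_nth in blast)

lemma precedes_hd_last: "xs \<noteq> [] \<Longrightarrow> hd xs \<noteq> last xs \<Longrightarrow> precedes xs (hd xs) (last xs)"
  by (cases xs) auto

lemma distinct_if_sorted_wrt_greater: "sorted_wrt (>) (xs :: 'a :: linorder list) \<Longrightarrow> distinct xs"
  by (induction xs) auto

lemma split_at_max:
  assumes "distinct (w :: 'a :: linorder list)" "w \<noteq> []"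
  obtains al n be where "w = al @ n # be" "\<forall>y\<in>set al \<union> set be. y < n"
proof -
  define n where "n = Max (set w)"
  then obtain al be where w: "w = al @ n # be"
    using assms(2) by (metis Max_in finite_set set_empty split_list)
  have "\<forall>y\<in>set al \<union> set be. y < n"
  proof
    fix y assume y: "y \<in> set al \<union> set be"
    then have "y \<le> Max (set w)" using w by simp
    moreover have "y \<noteq> n" using assms(1) w y by auto
    ultimately show "y < n" unfolding n_def by simp
  qed
  with w show ?thesis by (rule that)
qed

lemma decreasing_bounds:
  "sorted_wrt (>) (xs :: 'a :: linorder list) \<Longrightarrow> y \<in> set xs \<Longrightarrow> last xs \<le> y \<and> y \<le> hd xs"
proof (induction xs)
  case (Cons x xs)
  then show ?case using last_in_set[of xs] by (cases xs) auto
qed simp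

section \<open>Containment of classical patterns\<close>

lemma contains_trans: "contains p t \<Longrightarrow> contains t s \<Longrightarrow> contains p s"
proof -
  assume "contains p t" "contains t s"
  then obtain I J where
    I: "length I = length t" "sorted_wrt (<) I" "\<forall>k<length I. I ! k < length p"
       "\<forall>k<length t. \<forall>l<length t. t ! k < t ! l \<longleftrightarrow> p ! (I ! k) < p ! (I ! l)" and
    J: "length J = length s" "sorted_wrt (<) J" "\<forall>k<length J. J ! k < length t"
       "\<forall>k<length s. \<forall>l<length s. s ! k < s ! l \<longleftrightarrow> t ! (J ! k) < t ! (J ! l)"
    unfolding contains_def occurs_vinc_def by auto
  have "sorted_wrt (<) (map ((!) I) J)"
    using I(1,2) J(2,3) by (auto simp: sorted_wrt_iff_nth_less)
  with I J show "contains p s"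
    unfolding contains_def occurs_vinc_def by (intro exI[of _ "map ((!) I) J"]) auto
qed

lemma contains_insert: "contains (xs @ ys) t \<Longrightarrow> contains (xs @ z # ys) t"
proof -
  define f where "f i = (if i < length xs then i else Suc i)" for i
  have nth_f: "(xs @ z # ys) ! f i = (xs @ ys) ! i" for i
    by (simp add: f_def nth_append)
  have f_bound: "f i < Suc (length xs + length ys)" if "i < length xs + length ys" for i
    using that by (simp add: f_def)
  assume "contains (xs @ ys) t"
  then obtain I where
    I: "length I = length t" "sorted_wrt (<) I" "\<forall>k<length I. I ! k < length (xs @ ys)"
       "\<forall>k<length t. \<forall>l<length t. t ! k < t ! l \<longleftrightarrow> (xs @ ys) ! (I ! k) < (xs @ ys) ! (I ! l)"
    unfolding contains_def occurs_vinc_def by auto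
  have "strict_mono f" by (auto simp: strict_mono_def f_def)
  then have "sorted_wrt (<) (map f I)"
    using I(2) by (auto simp: sorted_wrt_map elim: sorted_wrt_mono_rel[rotated] dest: strict_monoD)
  with I show ?thesis
    unfolding contains_def occurs_vinc_def
    by (intro exI[of _ "map f I"]) (auto simp: nth_f f_bound)
qed

lemma distinct_positions_of_chain:
  assumes "distinct w" "set xs \<subseteq> set w" "sorted_wrt (precedes w) xs"
  shows "\<exists>I. length I = length xs \<and> sorted_wrt (<) I \<and>
           (\<forall>k<length I. I ! k < length w \<and> w ! (I ! k) = xs ! k)"
  using assms(2,3)
proof (induction xs)
  case (Cons x xs)
  then obtain I where I: "length I = length xs" "sorted_wrt (<) I"
    "\<forall>k<length I. I ! k < length w \<and> w ! (I ! k) = xs ! k" by auto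
  obtain i where i: "i < length w" "w ! i = x" using Cons.prems(1) by (auto simp: in_set_conv_nth)
  have "i < I ! k" if "k < length I" for k
  proof -
    have "precedes w (w ! i) (w ! (I ! k))"
      using Cons.prems(2) I that i by (auto simp: all_set_conv_all_nth)
    then show ?thesis using precedes_nth_iff[OF assms(1)] i I(3) that by blast
  qed
  then have "sorted_wrt (<) (i # I)" using I(2) by (auto simp: all_set_conv_all_nth)
  with I i show ?case by (intro exI[of _ "i # I"]) (auto simp: nth_Cons split: nat.split)
qed simp

lemma contains_iff_precedes_chain:
  assumes "distinct w"
  shows "contains w t \<longleftrightarrow> (\<exists>xs. length xs = length t \<and> set xs \<subseteq> set w \<and> sorted_wrt (precedes w) xs \<and>
           (\<forall>k<length t. \<forall>l<length t. t ! k < t ! l \<longleftrightarrow> xs ! k < xs ! l))"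
proof
  assume "contains w t"
  then obtain I where
    I: "length I = length t" "sorted_wrt (<) I" "\<forall>k<length I. I ! k < length w"
       "\<forall>k<length t. \<forall>l<length t. t ! k < t ! l \<longleftrightarrow> w ! (I ! k) < w ! (I ! l)"
    unfolding contains_def occurs_vinc_def by auto
  have "sorted_wrt (precedes w) (map ((!) w) I)"
    using I(2,3) by (auto simp: sorted_wrt_iff_nth_less intro: precedes_nth)
  moreover have "set (map ((!) w) I) \<subseteq> set w" using I(3) by (auto simp: in_set_conv_nth [of _ I])
  ultimately show "\<exists>xs. length xs = length t \<and> set xs \<subseteq> set w \<and> sorted_wrt (precedes w) xs \<and>
           (\<forall>k<length t. \<forall>l<length t. t ! k < t ! l \<longleftrightarrow> xs ! k < xs ! l)"
    using I(1,4) by (intro exI[of _ "map ((!) w) I"]) auto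
next
  assume "\<exists>xs. length xs = length t \<and> set xs \<subseteq> set w \<and> sorted_wrt (precedes w) xs \<and>
           (\<forall>k<length t. \<forall>l<length t. t ! k < t ! l \<longleftrightarrow> xs ! k < xs ! l)"
  then obtain xs where xs: "length xs = length t" "set xs \<subseteq> set w" "sorted_wrt (precedes w) xs"
    "\<forall>k<length t. \<forall>l<length t. t ! k < t ! l \<longleftrightarrow> xs ! k < xs ! l" by blast
  then obtain I where "length I = length xs" "sorted_wrt (<) I"
    "\<forall>k<length I. I ! k < length w \<and> w ! (I ! k) = xs ! k"
    using distinct_positions_of_chain[OF assms] by blast
  with xs show "contains w t" unfolding contains_def occurs_vinc_def by (intro exI[of _ I]) auto
qed

lemma ex_length_Suc_iff: "(\<exists>xs. length xs = Suc n \<and> P xs) \<longleftrightarrow> (\<exists>x xs. length xs = n \<and> P (x # xs))"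
  by (metis length_Suc_conv)

lemma ex_length_0_iff: "(\<exists>xs. length xs = 0 \<and> P xs) \<longleftrightarrow> P []"
  by auto

lemma contains_231_iff:
  assumes "distinct w"
  shows "contains w [2,3,1] \<longleftrightarrow>
    (\<exists>a b c. precedes w b c \<and> precedes w c a \<and> a < b \<and> b < c)" (is "_ \<longleftrightarrow> ?R")
proof
  assume "contains w [2,3,1]"
  then show ?R
    by (simp add: contains_iff_precedes_chain[OF assms] ex_length_Suc_iff ex_length_0_iff All_less_Suc)
      blast
next
  assume ?R
  then obtain a b c where "precedes w b c \<and> precedes w c a \<and> a < b \<and> b < c" by blast
  then show "contains w [2,3,1]" unfolding contains_iff_precedes_chain[OF assms]
    by (intro exI[of _ "[b,c,a]"])
      (auto simp: All_less_Suc dest: precedes_setD intro: precedes_trans[OF assms])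
qed

lemma contains_132_iff:
  assumes "distinct w"
  shows "contains w [1,3,2] \<longleftrightarrow>
    (\<exists>a b c. precedes w a c \<and> precedes w c b \<and> a < b \<and> b < c)" (is "_ \<longleftrightarrow> ?R")
proof
  assume "contains w [1,3,2]"
  then show ?R
    by (simp add: contains_iff_precedes_chain[OF assms] ex_length_Suc_iff ex_length_0_iff All_less_Suc)
      blast
next
  assume ?R
  then obtain a b c where "precedes w a c \<and> precedes w c b \<and> a < b \<and> b < c" by blast
  then show "contains w [1,3,2]" unfolding contains_iff_precedes_chain[OF assms]
    by (intro exI[of _ "[a,c,b]"])
      (auto simp: All_less_Suc dest: precedes_setD intro: precedes_trans[OF assms])
qed

lemma contains_3214_iff:
  assumes "distinct w"
  shows "contains w [3,2,1,4] \<longleftrightarrow>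
    (\<exists>a b c d. precedes w c b \<and> precedes w b a \<and> precedes w a d \<and> a < b \<and> b < c \<and> c < d)" (is "_ \<longleftrightarrow> ?R")
proof
  assume "contains w [3,2,1,4]"
  then show ?R
    by (simp add: contains_iff_precedes_chain[OF assms] ex_length_Suc_iff ex_length_0_iff All_less_Suc)
      blast
next
  assume ?R
  then obtain a b c d where "precedes w c b \<and> precedes w b a \<and> precedes w a d \<and> a < b \<and> b < c \<and> c < d" by blast
  then show "contains w [3,2,1,4]" unfolding contains_iff_precedes_chain[OF assms]
    by (intro exI[of _ "[c,b,a,d]"])
      (auto simp: All_less_Suc dest: precedes_setD intro: precedes_trans[OF assms])
qed

lemma contains_4213_iff:
  assumes "distinct w"
  shows "contains w [4,2,1,3] \<longleftrightarrow>
    (\<exists>a b c d. precedes w d b \<and> precedes w b a \<and> precedes w a c \<and> a < b \<and> b < c \<and> c < d)" (is "_ \<longleftrightarrow> ?R")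
proof
  assume "contains w [4,2,1,3]"
  then show ?R
    by (simp add: contains_iff_precedes_chain[OF assms] ex_length_Suc_iff ex_length_0_iff All_less_Suc)
      blast
next
  assume ?R
  then obtain a b c d where "precedes w d b \<and> precedes w b a \<and> precedes w a c \<and> a < b \<and> b < c \<and> c < d" by blast
  then show "contains w [4,2,1,3]" unfolding contains_iff_precedes_chain[OF assms]
    by (intro exI[of _ "[d,b,a,c]"])
      (auto simp: All_less_Suc dest: precedes_setD intro: precedes_trans[OF assms])
qed

lemma contains_132_snoc_iff:
  assumes "distinct (p @ [x])"
  shows "contains (p @ [x]) [1,3,2] \<longleftrightarrow>
    contains p [1,3,2] \<or> (\<exists>a c. precedes p a c \<and> a < x \<and> x < c)"
proof -
  have "distinct p" "x \<notin> set p" using assms by auto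
  then show ?thesis
    unfolding contains_132_iff[OF assms] contains_132_iff[OF \<open>distinct p\<close>]
    by (auto simp: precedes_snoc dest: precedes_setD)
qed

lemma contains_3214_snoc_iff:
  assumes "distinct (p @ [x])"
  shows "contains (p @ [x]) [3,2,1,4] \<longleftrightarrow> contains p [3,2,1,4] \<or>
    (\<exists>a b c. precedes p c b \<and> precedes p b a \<and> a < b \<and> b < c \<and> c < x)"
proof -
  have "distinct p" "x \<notin> set p" using assms by auto
  then show ?thesis
    unfolding contains_3214_iff[OF assms] contains_3214_iff[OF \<open>distinct p\<close>]
    by (auto simp: precedes_snoc dest: precedes_setD) (blast dest: precedes_setD)
qed

lemma contains_4213_snoc_iff:
  assumes "distinct (p @ [x])"
  shows "contains (p @ [x]) [4,2,1,3] \<longleftrightarrow> contains p [4,2,1,3] \<or>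
    (\<exists>a b d. precedes p d b \<and> precedes p b a \<and> a < b \<and> b < x \<and> x < d)"
proof -
  have "distinct p" "x \<notin> set p" using assms by auto
  then show ?thesis
    unfolding contains_4213_iff[OF assms] contains_4213_iff[OF \<open>distinct p\<close>]
    by (auto simp: precedes_snoc dest: precedes_setD) (blast dest: precedes_setD)
qed

definition avoids_132_3214_4213 :: "nat list \<Rightarrow> bool" where
  "avoids_132_3214_4213 w \<longleftrightarrow>
     \<not> contains w [1,3,2] \<and> \<not> contains w [3,2,1,4] \<and> \<not> contains w [4,2,1,3]"

lemma avoids_132_3214_4213_snoc_iff:
  assumes "distinct (p @ [x])"
  shows "avoids_132_3214_4213 (p @ [x]) \<longleftrightarrow> avoids_132_3214_4213 p \<and>
    \<not> (\<exists>a c. precedes p a c \<and> a < x \<and> x < c) \<and>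
    \<not> (\<exists>a b c. precedes p c b \<and> precedes p b a \<and> a < b \<and> b < c \<and> c < x) \<and>
    \<not> (\<exists>a b d. precedes p d b \<and> precedes p b a \<and> a < b \<and> b < x \<and> x < d)"
  unfolding avoids_132_3214_4213_def contains_132_snoc_iff[OF assms]
    contains_3214_snoc_iff[OF assms] contains_4213_snoc_iff[OF assms]
  by blast

lemma avoids_132_3214_4213_snoc_min:
  assumes "distinct (p @ [x])" "avoids_132_3214_4213 p" "\<forall>y\<in>set p. x < y"
  shows "avoids_132_3214_4213 (p @ [x])"
proof -
  have "\<not> a < x" if "precedes p a c \<or> precedes p c a" for a c
    using that assms(3) precedes_setD by fastforce
  then show ?thesis unfolding avoids_132_3214_4213_snoc_iff[OF assms(1)] using assms(2) by blast
qed

lemma avoids_132_3214_4213_contained: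
  "avoids_132_3214_4213 p \<Longrightarrow> contains p t \<Longrightarrow> avoids_132_3214_4213 t"
  unfolding avoids_132_3214_4213_def by (meson contains_trans)

section \<open>Pattern-avoiding stack machines\<close>

declare sc_aux.simps(2)[simp del]

fun pop_phase :: "nat list \<Rightarrow> nat set \<Rightarrow> nat \<Rightarrow> nat list \<Rightarrow> nat list \<times> nat list" where
  "pop_phase tau adj x [] = ([], [])"
| "pop_phase tau adj x (s # st) =
     (if occurs_vinc tau adj (x # s # st)
      then (s # fst (pop_phase tau adj x st), snd (pop_phase tau adj x st))
      else ([], s # st))"

lemma pop_phase_append: "fst (pop_phase tau adj x st) @ snd (pop_phase tau adj x st) = st"
  by (induction st) auto

lemma sc_aux_Cons:
  "sc_aux tau adj (x # xs) st =
     fst (pop_phase tau adj x st) @ sc_aux tau adj xs (x # snd (pop_phase tau adj x st))"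
  by (induction st) (auto simp: sc_aux.simps(2))

fun sc_state :: "nat list \<Rightarrow> nat set \<Rightarrow> nat list \<Rightarrow> nat list \<Rightarrow> nat list \<times> nat list" where
  "sc_state tau adj [] st = ([], st)"
| "sc_state tau adj (x # xs) st =
     (let (popped, rest) = pop_phase tau adj x st; (out, st') = sc_state tau adj xs (x # rest)
      in (popped @ out, st'))"

lemma sc_aux_append:
  "sc_aux tau adj (xs @ ys) st =
     fst (sc_state tau adj xs st) @ sc_aux tau adj ys (snd (sc_state tau adj xs st))"
  by (induction xs arbitrary: st) (auto simp: sc_aux_Cons split: prod.split)

lemma sc_aux_eq_sc_state:
  "sc_aux tau adj xs st = fst (sc_state tau adj xs st) @ snd (sc_state tau adj xs st)"
  using sc_aux_append[of tau adj xs "[]" st] by simp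

lemma sc_state_snoc:
  assumes "sc_state tau adj xs st = (out, st')" "pop_phase tau adj x st' = (popped, rest)"
  shows "sc_state tau adj (xs @ [x]) st = (out @ popped, x # rest)"
  using assms by (induction xs arbitrary: st out) (auto split: prod.splits)

lemma mset_sc_aux: "mset (sc_aux tau adj xs st) = mset xs + mset st"
proof (induction tau adj xs st rule: sc_aux.induct)
  case (2 tau adj x xs st)
  then show ?case by (cases st) (auto simp: sc_aux.simps(2))
qed simp

lemma set_sc_aux: "set (sc_aux tau adj xs st) = set xs \<union> set st"
  by (metis mset_sc_aux set_mset_mset set_mset_union)

section \<open>West's stack-sorting map\<close>

lemma occurs_21_iff: "occurs_vinc [2,1] {} w \<longleftrightarrow> (\<exists>u v. precedes w u v \<and> v < u)"
proof
  assume "occurs_vinc [2,1] {} w"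
  then obtain I where I: "length I = length [2,1::nat]" "sorted_wrt (<) I" "\<forall>k<length I. I ! k < length w"
    "\<forall>k<length [2,1::nat]. \<forall>l<length [2,1::nat]. [2,1::nat] ! k < [2,1] ! l \<longleftrightarrow> w ! (I ! k) < w ! (I ! l)"
    unfolding occurs_vinc_def by blast
  then have "precedes w (w ! (I ! 0)) (w ! (I ! 1))"
    by (intro precedes_nth) (auto simp: sorted_wrt_iff_nth_less)
  moreover have "w ! (I ! 1) < w ! (I ! 0)" using I(4)[rule_format, of 1 0] by simp
  ultimately show "\<exists>u v. precedes w u v \<and> v < u" by blast
next
  assume "\<exists>u v. precedes w u v \<and> v < u"
  then obtain u v i j where "i < j" "j < length w" "w ! i = u" "w ! j = v" "v < u"
    by (blast elim: precedesE)
  then show "occurs_vinc [2,1] {} w"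
    unfolding occurs_vinc_def by (intro exI[of _ "[i,j]"]) (auto simp: All_less_Suc)
qed

lemma pop_phase_21_below: "\<forall>s\<in>set st. s < n \<Longrightarrow> pop_phase [2,1] {} n st = (st, [])"
proof (induction st)
  case (Cons s st)
  then have "occurs_vinc [2,1] {} (n # s # st)" unfolding occurs_21_iff by auto
  with Cons show ?case by simp
qed simp

lemma occurs_21_append_max:
  "\<forall>y\<in>set w. y < n \<Longrightarrow> occurs_vinc [2,1] {} (w @ [n]) \<longleftrightarrow> occurs_vinc [2,1] {} w"
  unfolding occurs_21_iff by (auto simp: precedes_append dest: precedes_setD)

lemma sc_aux_21_append_max:
  "\<forall>y\<in>set xs \<union> set st. y < n \<Longrightarrow> sc_aux [2,1] {} xs (st @ [n]) = sc_aux [2,1] {} xs st @ [n]"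
proof (induction "[2,1::nat]" "{} :: nat set" xs st rule: sc_aux.induct)
  case (2 x xs st)
  have "occurs_vinc [2,1] {} (x # st @ [n]) \<longleftrightarrow> occurs_vinc [2,1] {} (x # st)"
    using "2.prems" occurs_21_append_max[of "x # st" n] by simp
  moreover have "\<not> occurs_vinc [2,1] {} [x, n]"
    using "2.prems" unfolding occurs_21_iff by auto
  ultimately show ?case
    using 2 by (cases st) (auto simp: sc_aux.simps(2))
qed simp

lemma west_s_split_max:
  assumes "\<forall>y\<in>set al \<union> set be. y < n"
  shows "west_s (al @ n # be) = west_s al @ west_s be @ [n]"
proof -
  obtain out st where st: "sc_state [2,1] {} al [] = (out, st)" by fastforce
  then have al: "west_s al = out @ st"
    unfolding west_s_def SC_def using sc_aux_eq_sc_state[of "[2,1]" "{}" al "[]"] by simp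
  then have "\<forall>s\<in>set st. s < n" using assms set_sc_aux[of "[2,1]" "{}" al "[]"]
    unfolding west_s_def SC_def by auto
  then have "sc_aux [2,1] {} (n # be) st = st @ sc_aux [2,1] {} be [n]"
    using pop_phase_21_below by (simp add: sc_aux_Cons)
  also have "sc_aux [2,1] {} be [n] = west_s be @ [n]"
    using sc_aux_21_append_max[of be "[]" n] assms unfolding west_s_def SC_def by simp
  finally show ?thesis
    using al st unfolding west_s_def SC_def by (simp add: sc_aux_append)
qed

lemma contains_231_split_maxD:
  assumes dist: "distinct (al @ n # be)" and lt: "\<forall>y\<in>set al \<union> set be. y < n"
    and "contains (al @ n # be) [2,3,1]"
  shows "contains al [2,3,1] \<or> contains be [2,3,1] \<or> (\<exists>a\<in>set al. \<exists>b\<in>set be. b < a)"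
proof -
  let ?w = "al @ n # be"
  have dist_al: "distinct al" and dist_be: "distinct be" using dist by auto
  obtain a b c where abc: "precedes ?w b c" "precedes ?w c a" "a < b" "b < c"
    using assms(3) contains_231_iff[OF dist] by blast
  have "\<forall>y\<in>set ?w. y \<le> n" using lt by (auto simp: less_imp_le)
  then have "c \<le> n" using precedes_setD[OF abc(1)] by blast
  then have "a \<in> set al \<union> set be" "b \<in> set al \<union> set be"
    using abc precedes_setD[OF abc(1)] precedes_setD[OF abc(2)] by auto
  then consider "b \<in> set al" "a \<in> set al" | "b \<in> set al" "a \<in> set be" | "b \<in> set be" by blast
  then show ?thesis
  proof cases
    case 1
    then have ca: "precedes al c a" using abc(2) dist precedes_append_left[of al "n # be" c a] by auto
    then have "precedes al b c"
      using abc(1) dist precedes_append_left[of al "n # be" b c] precedes_setD[OF ca] by auto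
    then show ?thesis using ca abc(3,4) contains_231_iff[OF dist_al] by blast
  next
    case 2
    then show ?thesis using abc(3) by blast
  next
    case 3
    then have "b \<notin> set al" "b \<noteq> n" using dist by auto
    then have "precedes be b c" using abc(1) precedes_append_right[of al "n # be" b c] by auto
    then have "c \<notin> set al" "c \<noteq> n" using dist precedes_setD by fastforce+
    then have "precedes be c a" using abc(2) precedes_append_right[of al "n # be" c a] by auto
    then show ?thesis using \<open>precedes be b c\<close> abc(3,4) contains_231_iff[OF dist_be] by blast
  qed
qed

lemma contains_231_split_max:
  assumes dist: "distinct (al @ n # be)" and lt: "\<forall>y\<in>set al \<union> set be. y < n"
  shows "contains (al @ n # be) [2,3,1] \<longleftrightarrow>
    contains al [2,3,1] \<or> contains be [2,3,1] \<or> (\<exists>a\<in>set al. \<exists>b\<in>set be. b < a)"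
proof
  assume "contains al [2,3,1] \<or> contains be [2,3,1] \<or> (\<exists>a\<in>set al. \<exists>b\<in>set be. b < a)"
  moreover have "distinct al" "distinct be" using dist by auto
  ultimately have "\<exists>a b c. precedes (al @ n # be) b c \<and> precedes (al @ n # be) c a \<and> a < b \<and> b < c"
    using lt unfolding contains_231_iff[OF \<open>distinct al\<close>] contains_231_iff[OF \<open>distinct be\<close>]
    by (elim disjE bexE exE conjE) (auto simp: precedes_append)
  then show "contains (al @ n # be) [2,3,1]" using contains_231_iff[OF dist] by blast
qed (rule contains_231_split_maxD[OF assms])

lemma set_west_s: "set (west_s w) = set w"
  by (simp add: west_s_def SC_def set_sc_aux)

lemma sorted_west_s_iff: "distinct w \<Longrightarrow> sorted_wrt (<) (west_s w) \<longleftrightarrow> \<not> contains w [2,3,1]"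
proof (induction "length w" arbitrary: w rule: less_induct)
  case less
  show ?case
  proof (cases "w = []")
    case True
    then show ?thesis using contains_231_iff[of "[]"] by (simp add: west_s_def SC_def)
  next
    case False
    then obtain al n be where w: "w = al @ n # be" and lt: "\<forall>y\<in>set al \<union> set be. y < n"
      using split_at_max less.prems by blast
    have IH: "sorted_wrt (<) (west_s al) \<longleftrightarrow> \<not> contains al [2,3,1]"
      "sorted_wrt (<) (west_s be) \<longleftrightarrow> \<not> contains be [2,3,1]"
      using less.hyps[of al] less.hyps[of be] less.prems unfolding w by auto
    have "sorted_wrt (<) (west_s w) \<longleftrightarrow>
        sorted_wrt (<) (west_s al) \<and> sorted_wrt (<) (west_s be) \<and> (\<forall>a\<in>set al. \<forall>b\<in>set be. a < b)"
      using lt by (auto simp: w west_s_split_max sorted_wrt_append set_west_s)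
    also have "\<dots> \<longleftrightarrow> \<not> contains al [2,3,1] \<and> \<not> contains be [2,3,1] \<and>
        \<not> (\<exists>a\<in>set al. \<exists>b\<in>set be. b < a)"
    proof -
      have "a \<noteq> b" if "a \<in> set al" "b \<in> set be" for a b
        using less.prems w that by auto
      then have "(\<forall>a\<in>set al. \<forall>b\<in>set be. a < b) \<longleftrightarrow> \<not> (\<exists>a\<in>set al. \<exists>b\<in>set be. b < a)"
        by (meson linorder_neqE_nat order_less_asym)
      then show ?thesis using IH by simp
    qed
    also have "\<dots> \<longleftrightarrow> \<not> contains w [2,3,1]"
      using contains_231_split_max[of al n be] less.prems w lt by simp
    finally show ?thesis .
  qed
qed

section \<open>The machine SC_{1_23}\<close>

(* The simplifier rewrites the numeral 1 to Suc 0, so facts mentioning [1,2,3] and {1} are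
   handed to it as instances (via using) rather than as rewrite rules. *)

lemma occurs_1_23_iff:
  "occurs_vinc [1,2,3] {1} w \<longleftrightarrow> (\<exists>i j. i < j \<and> Suc j < length w \<and> w ! i < w ! j \<and> w ! j < w ! Suc j)"
proof
  assume "occurs_vinc [1,2,3] {1} w"
  then obtain I where I: "length I = length [1,2,3::nat]" "sorted_wrt (<) I" "\<forall>k<length I. I ! k < length w"
    "\<forall>k<length [1,2,3::nat]. \<forall>l<length [1,2,3::nat]. [1,2,3::nat] ! k < [1,2,3] ! l \<longleftrightarrow> w ! (I ! k) < w ! (I ! l)"
    "\<forall>k. k \<in> {1} \<longrightarrow> Suc k < length [1,2,3::nat] \<longrightarrow> I ! Suc k = Suc (I ! k)"
    unfolding occurs_vinc_def by blast
  have "I ! 0 < I ! 1" using I(1,2) by (simp add: sorted_wrt_nth_less)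
  moreover have "w ! (I ! 0) < w ! (I ! 1)" "w ! (I ! 1) < w ! (I ! 2)"
    using I(4)[rule_format, of 0 1] I(4)[rule_format, of 1 2] by simp_all
  moreover have "I ! 2 < length w" using I(1,3) by simp
  moreover have "I ! 2 = Suc (I ! 1)" using I(5) by (simp add: numeral_2_eq_2)
  ultimately show "\<exists>i j. i < j \<and> Suc j < length w \<and> w ! i < w ! j \<and> w ! j < w ! Suc j"
    by metis
next
  assume "\<exists>i j. i < j \<and> Suc j < length w \<and> w ! i < w ! j \<and> w ! j < w ! Suc j"
  then obtain i j where "i < j" "Suc j < length w" "w ! i < w ! j" "w ! j < w ! Suc j" by blast
  then show "occurs_vinc [1,2,3] {1} w"
    unfolding occurs_vinc_def by (intro exI[of _ "[i, j, Suc j]"]) (auto simp: All_less_Suc)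
qed

fun ascent_above :: "nat \<Rightarrow> nat list \<Rightarrow> bool" where
  "ascent_above x (u # v # r) \<longleftrightarrow> x < u \<and> u < v \<or> ascent_above x (v # r)"
| "ascent_above x _ \<longleftrightarrow> False"

lemma ascent_above_iff:
  "ascent_above x ys \<longleftrightarrow> (\<exists>j. Suc j < length ys \<and> x < ys ! j \<and> ys ! j < ys ! Suc j)"
proof (induction x ys rule: ascent_above.induct)
  case (1 x u v r)
  have "(\<exists>j. Suc j < length (u # v # r) \<and> x < (u # v # r) ! j \<and> (u # v # r) ! j < (u # v # r) ! Suc j)
    \<longleftrightarrow> x < u \<and> u < v \<or> (\<exists>j. Suc j < length (v # r) \<and> x < (v # r) ! j \<and> (v # r) ! j < (v # r) ! Suc j)"
    by (auto simp: less_Suc_eq_0_disj)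
  with 1 show ?case by simp
qed simp_all

lemma occurs_1_23_Cons:
  "occurs_vinc [1,2,3] {1} (x # ys) \<longleftrightarrow> ascent_above x ys \<or> occurs_vinc [1,2,3] {1} ys"
  unfolding occurs_1_23_iff ascent_above_iff
proof
  assume "\<exists>i j. i < j \<and> Suc j < length (x # ys) \<and> (x # ys) ! i < (x # ys) ! j \<and> (x # ys) ! j < (x # ys) ! Suc j"
  then obtain i j where ij: "i < j" "Suc j < length (x # ys)" "(x # ys) ! i < (x # ys) ! j"
    "(x # ys) ! j < (x # ys) ! Suc j" by blast
  then obtain j' where j: "j = Suc j'" by (cases j) auto
  show "(\<exists>j. Suc j < length ys \<and> x < ys ! j \<and> ys ! j < ys ! Suc j) \<or>
    (\<exists>i j. i < j \<and> Suc j < length ys \<and> ys ! i < ys ! j \<and> ys ! j < ys ! Suc j)"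
  proof (cases i)
    case 0
    then show ?thesis using ij j by auto
  next
    case (Suc i')
    then show ?thesis using ij j by (intro disjI2 exI[of _ i'] exI[of _ j']) auto
  qed
next
  assume "(\<exists>j. Suc j < length ys \<and> x < ys ! j \<and> ys ! j < ys ! Suc j) \<or>
    (\<exists>i j. i < j \<and> Suc j < length ys \<and> ys ! i < ys ! j \<and> ys ! j < ys ! Suc j)"
  then show "\<exists>i j. i < j \<and> Suc j < length (x # ys) \<and> (x # ys) ! i < (x # ys) ! j \<and> (x # ys) ! j < (x # ys) ! Suc j"
  proof (elim disjE exE conjE)
    fix j assume "Suc j < length ys" "x < ys ! j" "ys ! j < ys ! Suc j"
    then show ?thesis by (intro exI[of _ 0] exI[of _ "Suc j"]) auto
  next
    fix i j assume "i < j" "Suc j < length ys" "ys ! i < ys ! j" "ys ! j < ys ! Suc j"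
    then show ?thesis by (intro exI[of _ "Suc i"] exI[of _ "Suc j"]) auto
  qed
qed

lemma not_ascent_above_decreasing: "sorted_wrt (>) ys \<Longrightarrow> \<not> ascent_above x ys"
  by (induction x ys rule: ascent_above.induct) auto

lemma not_occurs_1_23_decreasing: "sorted_wrt (>) ys \<Longrightarrow> \<not> occurs_vinc [1,2,3] {1} ys"
proof (induction ys)
  case Nil
  then show ?case unfolding occurs_1_23_iff by simp
next
  case (Cons y ys)
  then show ?case using occurs_1_23_Cons[of y ys] not_ascent_above_decreasing by simp
qed

definition two_decreasing_runs :: "nat list \<Rightarrow> nat list \<Rightarrow> bool" where
  "two_decreasing_runs U V \<longleftrightarrow>
     sorted_wrt (>) U \<and> sorted_wrt (>) V \<and> (U \<noteq> [] \<longrightarrow> V \<noteq> [] \<and> last U < hd V)"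

lemma ascent_above_two_runs:
  assumes "two_decreasing_runs U V" "U \<noteq> []"
  shows "ascent_above x (U @ V) \<longleftrightarrow> x < last U"
  using assms
proof (induction U)
  case (Cons u U)
  show ?case
  proof (cases U)
    case Nil
    with Cons.prems obtain v V' where "V = v # V'" "sorted_wrt (>) V" "u < v"
      by (cases V) (auto simp: two_decreasing_runs_def)
    with Nil show ?thesis using not_ascent_above_decreasing[of "v # V'" x] by auto
  next
    case (Cons u' U')
    with Cons.prems have "two_decreasing_runs U V" "u' < u"
      by (auto simp: two_decreasing_runs_def)
    with Cons Cons.IH show ?thesis by auto
  qed
qed simp

lemma not_occurs_1_23_two_runs: "two_decreasing_runs U V \<Longrightarrow> \<not> occurs_vinc [1,2,3] {1} (U @ V)"
proof (induction U)
  case Nil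
  then show ?case using not_occurs_1_23_decreasing by (simp add: two_decreasing_runs_def)
next
  case (Cons u U)
  then have runs: "two_decreasing_runs U V"
    by (cases U) (auto simp: two_decreasing_runs_def)
  have "\<not> ascent_above u (U @ V)"
  proof (cases "U = []")
    case True
    then show ?thesis using Cons.prems by (simp add: two_decreasing_runs_def not_ascent_above_decreasing)
  next
    case False
    then have "last U < u" using Cons.prems by (auto simp: two_decreasing_runs_def)
    then show ?thesis using ascent_above_two_runs[OF runs False] by simp
  qed
  then show ?case using occurs_1_23_Cons[of u "U @ V"] Cons.IH[OF runs] by simp
qed

lemma pop_phase_1_23_no_pop:
  assumes "two_decreasing_runs U V" "U = [] \<or> last U < x"
  shows "pop_phase [1,2,3] {1} x (U @ V) = ([], U @ V)"
proof (cases "U @ V")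
  case (Cons s st)
  have "\<not> ascent_above x (U @ V)"
  proof (cases "U = []")
    case True
    then show ?thesis using assms(1) by (simp add: two_decreasing_runs_def not_ascent_above_decreasing)
  next
    case False
    then show ?thesis using ascent_above_two_runs[OF assms(1)] assms(2) by simp
  qed
  then have "\<not> occurs_vinc [1,2,3] {1} (x # s # st)"
    using occurs_1_23_Cons[of x "s # st"] not_occurs_1_23_two_runs[OF assms(1)] Cons by simp
  then show ?thesis using Cons by simp
qed simp

lemma pop_phase_1_23_pop_run:
  "two_decreasing_runs U V \<Longrightarrow> U \<noteq> [] \<Longrightarrow> x < last U \<Longrightarrow> pop_phase [1,2,3] {1} x (U @ V) = (U, V)"
proof (induction U)
  case (Cons u U)
  have "occurs_vinc [1,2,3] {1} (x # u # U @ V)"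
    using occurs_1_23_Cons[of x "u # U @ V"] ascent_above_two_runs[OF Cons.prems(1)] Cons.prems(2,3)
    by simp
  moreover have "pop_phase [1,2,3] {1} x (U @ V) = (U, V)"
  proof (cases "U = []")
    case True
    then show ?thesis using pop_phase_1_23_no_pop[of "[]" V x] Cons.prems(1)
      by (simp add: two_decreasing_runs_def)
  next
    case False
    then show ?thesis using Cons.IH Cons.prems by (cases U) (auto simp: two_decreasing_runs_def)
  qed
  ultimately show ?case by simp
qed simp

(* After reading p the output is out and the stack, top first, is U @ V.  Entries are pushed in
   reading order, so p lists V backwards, then the block Q of entries already output, then U
   backwards. *)
definition sc_1_23_invariant :: "nat list \<Rightarrow> nat list \<Rightarrow> nat list \<Rightarrow> nat list \<Rightarrow> bool" where
  "sc_1_23_invariant p out U V \<longleftrightarrow>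
     (\<exists>Q. p = rev V @ Q @ rev U \<and> set Q = set out) \<and>
     sorted_wrt (>) (out @ U) \<and> two_decreasing_runs U V \<and>
     (\<forall>y\<in>set (out @ U). y < last V \<or> hd V < y) \<and>
     (out \<noteq> [] \<longrightarrow> U \<noteq> [] \<and> last out < hd V) \<and> (p \<noteq> [] \<longrightarrow> V \<noteq> [])"

lemma sc_1_23_invariant_no_231:
  assumes inv: "sc_1_23_invariant p out U V" and "distinct p"
  shows "\<not> contains (out @ U @ V) [2,3,1]"
proof
  obtain Q where Q: "p = rev V @ Q @ rev U" "set Q = set out"
    using inv unfolding sc_1_23_invariant_def by blast
  have dec: "sorted_wrt (>) (out @ U)" "sorted_wrt (>) V"
    and outside: "\<forall>y\<in>set (out @ U). y < last V \<or> hd V < y"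
    using inv unfolding sc_1_23_invariant_def two_decreasing_runs_def by blast+
  have disj: "set (out @ U) \<inter> set V = {}" using \<open>distinct p\<close> Q by auto
  then have "distinct ((out @ U) @ V)"
    using distinct_if_sorted_wrt_greater[OF dec(1)] distinct_if_sorted_wrt_greater[OF dec(2)]
    by (simp only: distinct_append)
  moreover assume "contains (out @ U @ V) [2,3,1]"
  ultimately obtain a b c where abc: "precedes ((out @ U) @ V) b c" "precedes ((out @ U) @ V) c a"
    "a < b" "b < c"
    using contains_231_iff[of "(out @ U) @ V"] by auto
  have "\<not> precedes (out @ U) b c" "\<not> precedes V b c"
    using sorted_wrt_precedes[OF dec(1), of b c] sorted_wrt_precedes[OF dec(2), of b c] abc(4) by auto
  then have bc: "b \<in> set (out @ U)" "c \<in> set V"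
    using abc(1) precedes_append[of "out @ U" V b c] by blast+
  then have "c \<notin> set (out @ U)" using disj by blast
  then have "precedes V c a" using precedes_append_right[OF abc(2)] by blast
  then have "a \<in> set V" by (rule precedes_setD)
  then have "last V \<le> a" "c \<le> hd V" using decreasing_bounds[OF dec(2)] bc(2) by blast+
  moreover have "b < last V \<or> hd V < b" using outside bc(1) by blast
  ultimately show False using abc(3,4) by linarith
qed

definition sc_1_23_outcome :: "nat list \<Rightarrow> nat list \<Rightarrow> nat list \<Rightarrow> bool" where
  "sc_1_23_outcome p out st \<longleftrightarrow>
     avoids_132_3214_4213 p \<and> (\<exists>U V. st = U @ V \<and> sc_1_23_invariant p out U V) \<or>
     \<not> avoids_132_3214_4213 p \<and> contains (out @ st) [2,3,1]"

lemma sc_1_23_outcomeI_success: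
  "avoids_132_3214_4213 p \<Longrightarrow> sc_1_23_invariant p out U V \<Longrightarrow> sc_1_23_outcome p out (U @ V)"
  unfolding sc_1_23_outcome_def by blast

lemma sc_1_23_outcomeI_failure:
  "\<not> avoids_132_3214_4213 p \<Longrightarrow> contains (out @ st) [2,3,1] \<Longrightarrow> sc_1_23_outcome p out st"
  unfolding sc_1_23_outcome_def by blast

locale sc_1_23_step =
  fixes p out U V Q :: "nat list" and x :: nat
  assumes p_eq: "p = rev V @ Q @ rev U"
    and set_Q: "set Q = set out"
    and out_U_dec: "sorted_wrt (>) (out @ U)"
    and runs: "two_decreasing_runs U V"
    and out_U_outside_V: "\<forall>y\<in>set (out @ U). y < last V \<or> hd V < y"
    and out_nonempty: "out \<noteq> [] \<Longrightarrow> U \<noteq> [] \<and> last out < hd V"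
    and p_nonempty: "p \<noteq> [] \<Longrightarrow> V \<noteq> []"
    and distinct_px: "distinct (p @ [x])"
    and avoids_p: "avoids_132_3214_4213 p"
begin

lemma U_dec: "sorted_wrt (>) U" and out_dec: "sorted_wrt (>) out"
  and out_greater_U: "a \<in> set out \<Longrightarrow> b \<in> set U \<Longrightarrow> b < a"
  using out_U_dec by (auto simp: sorted_wrt_append)

lemma V_dec: "sorted_wrt (>) V" and U_below_V: "U \<noteq> [] \<Longrightarrow> V \<noteq> [] \<and> last U < hd V"
  using runs by (auto simp: two_decreasing_runs_def)

lemma V_bounds: "y \<in> set V \<Longrightarrow> last V \<le> y \<and> y \<le> hd V"
  using decreasing_bounds[OF V_dec] .

lemma U_bounds: "y \<in> set U \<Longrightarrow> last U \<le> y \<and> y \<le> hd U"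
  using decreasing_bounds[OF U_dec] .

lemma x_fresh: "x \<notin> set V" "x \<notin> set Q" "x \<notin> set U" "x \<notin> set out"
  using distinct_px p_eq set_Q by auto

lemma disjoint_parts: "set V \<inter> set Q = {}" "set V \<inter> set U = {}" "set Q \<inter> set U = {}"
  using distinct_px p_eq by auto

lemma distinct_output: "distinct (out @ x # U @ V)"
  using distinct_if_sorted_wrt_greater[OF out_U_dec] distinct_if_sorted_wrt_greater[OF V_dec]
    disjoint_parts x_fresh set_Q by auto

lemma precedes_p:
  "precedes p u v \<longleftrightarrow> precedes V v u \<or> precedes Q u v \<or> precedes U v u \<or>
     u \<in> set V \<and> v \<in> set Q \<or> u \<in> set V \<and> v \<in> set U \<or> u \<in> set Q \<and> v \<in> set U"
  unfolding p_eq by (auto simp: precedes_append precedes_rev)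

lemma fail_inside_run:
  assumes "R = U \<or> R = V" "R \<noteq> []" "last R < x" "x < hd R"
  shows "sc_1_23_outcome (p @ [x]) out (x # U @ V)"
proof (rule sc_1_23_outcomeI_failure)
  have hd_last: "precedes R (hd R) (last R)" using assms by (intro precedes_hd_last) auto
  then have "precedes p (last R) (hd R)" using assms(1) by (auto simp: precedes_p)
  then show "\<not> avoids_132_3214_4213 (p @ [x])"
    using assms(3,4) avoids_132_3214_4213_snoc_iff[OF distinct_px] by blast
  have "precedes (out @ x # U @ V) x (hd R)" "precedes (out @ x # U @ V) (hd R) (last R)"
    using hd_last assms(1,2) by (auto simp: precedes_append)
  then show "contains (out @ x # U @ V) [2,3,1]"
    unfolding contains_231_iff[OF distinct_output] using assms(3,4) by blast
qed

lemma fail_above_out: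
  assumes "out \<noteq> []" "last out < x"
  shows "sc_1_23_outcome (p @ [x]) out (x # U @ V)"
proof (rule sc_1_23_outcomeI_failure)
  define f d h where "f = last out" and "d = last U" and "h = hd V"
  have U: "U \<noteq> []" and "f < h" using out_nonempty[OF assms(1)] by (simp_all add: f_def h_def)
  have V: "V \<noteq> []" using U_below_V[OF U] by simp
  have f: "f \<in> set out" "f \<in> set Q" using assms(1) set_Q by (simp_all add: f_def)
  have d: "d \<in> set U" using U by (simp add: d_def)
  have "d < f" using out_greater_U[OF f(1) d] .
  have "h \<in> set V" using V by (simp add: h_def)
  have "precedes p h f" "precedes p f d" using \<open>h \<in> set V\<close> f d by (simp_all add: precedes_p)
  moreover have "x \<noteq> h" using x_fresh \<open>h \<in> set V\<close> by blast
  ultimately show "\<not> avoids_132_3214_4213 (p @ [x])"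
    unfolding avoids_132_3214_4213_snoc_iff[OF distinct_px]
    using assms(2) \<open>d < f\<close> \<open>f < h\<close> f_def by (metis linorder_neqE_nat)
  have "precedes (out @ x # U @ V) f x" "precedes (out @ x # U @ V) x d"
    using f d by (auto simp: precedes_append)
  then show "contains (out @ x # U @ V) [2,3,1]"
    unfolding contains_231_iff[OF distinct_output] using assms(2) \<open>d < f\<close> f_def by blast
qed

lemma success_empty:
  assumes "V = []"
  shows "sc_1_23_outcome (p @ [x]) out (x # U @ V)"
proof -
  have "p = []" "U = []" using assms p_nonempty U_below_V by auto
  then have "out = []" using out_nonempty by auto
  have "avoids_132_3214_4213 (p @ [x])"
    using avoids_132_3214_4213_snoc_min[OF distinct_px avoids_p] \<open>p = []\<close> by simp
  moreover have "sc_1_23_invariant (p @ [x]) out [] [x]"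
    using \<open>p = []\<close> \<open>out = []\<close> by (simp add: sc_1_23_invariant_def two_decreasing_runs_def)
  ultimately show ?thesis using sc_1_23_outcomeI_success[of "p @ [x]" out "[]" "[x]"] assms \<open>U = []\<close>
    by simp
qed

lemma success_above_V:
  assumes "U = []" "V \<noteq> []" "hd V < x"
  shows "sc_1_23_outcome (p @ [x]) out (x # U @ V)"
proof -
  have "out = []" using assms(1) out_nonempty by auto
  then have p: "p = rev V" using p_eq set_Q assms(1) by simp
  have V_less: "y < x" if "y \<in> set V" for y using V_bounds[OF that] assms(3) by simp
  have increasing: "u < v" if "precedes p u v" for u v
    using that sorted_wrt_precedes[OF V_dec] by (simp add: p precedes_rev)
  have p_less: "u < x" "v < x" if "precedes p u v" for u v
    using precedes_setD[OF that] V_less by (auto simp: p)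
  have "avoids_132_3214_4213 (p @ [x])"
    unfolding avoids_132_3214_4213_snoc_iff[OF distinct_px]
    using avoids_p by (auto dest: increasing p_less)
  moreover have "sc_1_23_invariant (p @ [x]) [] [] (x # V)"
    unfolding sc_1_23_invariant_def two_decreasing_runs_def
    using p V_dec V_less by auto
  ultimately show ?thesis using sc_1_23_outcomeI_success[of "p @ [x]" out "[]" "x # V"] assms(1) \<open>out = []\<close>
    by simp
qed

lemma success_below:
  assumes "V \<noteq> []" "x < last V" "U \<noteq> [] \<Longrightarrow> x < last U"
  shows "sc_1_23_outcome (p @ [x]) (out @ U) (x # V)"
proof -
  have U_greater: "x < y" if "y \<in> set U" for y
    using assms(3) U_bounds[OF that] that by fastforce
  have out_greater: "x < y" if "y \<in> set out" for y
    using out_nonempty U_greater out_greater_U[OF that] that by (metis last_in_set order.strict_trans)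
  have V_greater: "x < y" if "y \<in> set V" for y using V_bounds[OF that] assms(2) by simp
  have "avoids_132_3214_4213 (p @ [x])"
    using avoids_132_3214_4213_snoc_min[OF distinct_px avoids_p] p_eq set_Q
      U_greater out_greater V_greater by auto
  moreover have "sc_1_23_invariant (p @ [x]) (out @ U) [x] V"
    unfolding sc_1_23_invariant_def
  proof (intro conjI)
    show "\<exists>Q'. p @ [x] = rev V @ Q' @ rev [x] \<and> set Q' = set (out @ U)"
      using p_eq set_Q by (intro exI[of _ "Q @ rev U"]) auto
    show "sorted_wrt (>) ((out @ U) @ [x])"
      using out_U_dec U_greater out_greater by (auto simp: sorted_wrt_append)
    show "two_decreasing_runs [x] V"
      using V_dec assms(1,2) V_bounds[of "hd V"] by (simp add: two_decreasing_runs_def)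
    show "\<forall>y\<in>set ((out @ U) @ [x]). y < last V \<or> hd V < y"
      using out_U_outside_V assms(2) by auto
    show "out @ U \<noteq> [] \<longrightarrow> [x] \<noteq> [] \<and> last (out @ U) < hd V"
      using out_nonempty U_below_V by auto
    show "p @ [x] \<noteq> [] \<longrightarrow> V \<noteq> []" using assms(1) by simp
  qed
  ultimately show ?thesis using sc_1_23_outcomeI_success[of "p @ [x]" "out @ U" "[x]" V] by simp
qed

context
  assumes U_below_x: "hd U < x" and x_outside_V: "x < last V \<or> hd V < x"
    and out_above_x: "\<forall>y\<in>set out. x < y"
begin

lemma Q_above_x: "y \<in> set Q \<Longrightarrow> x < y"
  using out_above_x set_Q by auto

lemma U_entries_below_x: "y \<in> set U \<Longrightarrow> y < x"
  using U_bounds U_below_x by fastforce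

lemma push_U_no_132:
  assumes prec: "precedes p a c"
  shows "\<not> (a < x \<and> x < c)"
proof
  assume ineq: "a < x \<and> x < c"
  then have "a \<notin> set Q" "c \<notin> set U" using Q_above_x U_entries_below_x by force+
  then consider "precedes V c a" | "a \<in> set V" "c \<in> set Q"
    using prec unfolding precedes_p by (blast dest: precedes_setD)
  then show False
  proof cases
    case 1
    then show False using ineq x_outside_V V_bounds precedes_setD[OF 1] by fastforce
  next
    case 2
    then have "hd V < x" using ineq x_outside_V V_bounds by fastforce
    moreover have "out \<noteq> []" using 2 set_Q by auto
    ultimately show False using out_nonempty out_above_x last_in_set by fastforce
  qed
qed

lemma push_U_no_3214:
  assumes cb: "precedes p c b" and ba: "precedes p b a"
  shows "\<not> (a < b \<and> b < c \<and> c < x)"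
proof
  assume ineq: "a < b \<and> b < c \<and> c < x"
  then have "b \<notin> set Q" "c \<notin> set Q" using Q_above_x by force+
  moreover have "\<not> precedes V b c" "\<not> precedes U b c"
    using sorted_wrt_precedes[OF V_dec] sorted_wrt_precedes[OF U_dec] ineq by force+
  ultimately have "b \<in> set U" using cb unfolding precedes_p by (blast dest: precedes_setD)
  then have "precedes U a b"
    using ba disjoint_parts unfolding precedes_p by (blast dest: precedes_setD)
  then show False using sorted_wrt_precedes[OF U_dec] ineq by force
qed

lemma push_U_no_4213:
  assumes db: "precedes p d b" and ba: "precedes p b a"
  shows "\<not> (a < b \<and> b < x \<and> x < d)"
proof
  assume ineq: "a < b \<and> b < x \<and> x < d"
  then have "a \<notin> set Q" "b \<notin> set Q" using Q_above_x by force+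
  moreover have "\<not> precedes V a b" "\<not> precedes U a b"
    using sorted_wrt_precedes[OF V_dec] sorted_wrt_precedes[OF U_dec] ineq by force+
  ultimately have "b \<in> set V" using ba unfolding precedes_p by (blast dest: precedes_setD)
  then have "precedes V b d"
    using db disjoint_parts unfolding precedes_p by (blast dest: precedes_setD)
  then show False using sorted_wrt_precedes[OF V_dec] ineq by force
qed

lemma avoids_push_U: "avoids_132_3214_4213 (p @ [x])"
  unfolding avoids_132_3214_4213_snoc_iff[OF distinct_px]
  using avoids_p push_U_no_132 push_U_no_3214 push_U_no_4213 by blast

end

lemma success_push_U:
  assumes "U \<noteq> []" "hd U < x" "\<not> (last V < x \<and> x < hd V)" "\<not> (out \<noteq> [] \<and> last out < x)"
  shows "sc_1_23_outcome (p @ [x]) out ((x # U) @ V)"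
proof -
  have V: "V \<noteq> []" using U_below_V assms(1) by simp
  then have "x \<noteq> last V" "x \<noteq> hd V" using x_fresh(1) by auto
  then have x_outside: "x < last V \<or> hd V < x" using assms(3) by linarith
  have out_greater: "\<forall>y\<in>set out. x < y"
  proof
    fix y assume y: "y \<in> set out"
    then have "out \<noteq> []" by auto
    then have "x \<noteq> last out" "\<not> last out < x" using x_fresh(4) assms(4) last_in_set by auto
    then show "x < y" using decreasing_bounds[OF out_dec y] by simp
  qed
  have U_less: "\<forall>y\<in>set U. y < x" using U_bounds assms(2) by fastforce
  have "avoids_132_3214_4213 (p @ [x])" using avoids_push_U assms(2) x_outside out_greater .
  moreover have "sc_1_23_invariant (p @ [x]) out (x # U) V"
    unfolding sc_1_23_invariant_def
  proof (intro conjI)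
    show "\<exists>Q'. p @ [x] = rev V @ Q' @ rev (x # U) \<and> set Q' = set out"
      using p_eq set_Q by auto
    show "sorted_wrt (>) (out @ x # U)"
      using out_U_dec out_greater U_less by (auto simp: sorted_wrt_append)
    show "two_decreasing_runs (x # U) V"
      using runs U_less assms(1) by (auto simp: two_decreasing_runs_def)
    show "\<forall>y\<in>set (out @ x # U). y < last V \<or> hd V < y"
      using out_U_outside_V x_outside by auto
    show "out \<noteq> [] \<longrightarrow> x # U \<noteq> [] \<and> last out < hd V" using out_nonempty by simp
    show "p @ [x] \<noteq> [] \<longrightarrow> V \<noteq> []" using V by simp
  qed
  ultimately show ?thesis by (rule sc_1_23_outcomeI_success)
qed

lemma outcome_snoc:
  "sc_1_23_outcome (p @ [x]) (out @ fst (pop_phase [1,2,3] {1} x (U @ V)))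
     (x # snd (pop_phase [1,2,3] {1} x (U @ V)))"
proof -
  have no_pop: "U = [] \<or> last U < x \<Longrightarrow> pop_phase [1,2,3] {1} x (U @ V) = ([], U @ V)"
    using pop_phase_1_23_no_pop[OF runs] by simp
  consider "V = []" | "U = []" "V \<noteq> []" | "U \<noteq> []" "V \<noteq> []" using U_below_V by blast
  then show ?thesis
  proof cases
    case 1
    then have "U = []" using U_below_V by auto
    then show ?thesis using success_empty[OF 1] 1 by simp
  next
    case 2
    then have "x \<noteq> last V" "x \<noteq> hd V" using x_fresh(1) by auto
    then consider "hd V < x" | "last V < x \<and> x < hd V" | "x < last V" by linarith
    then show ?thesis
      using 2 no_pop success_above_V fail_inside_run[of V] success_below by cases simp_all
  next
    case 3
    then have "x \<noteq> last U" "x \<noteq> hd U" using x_fresh(3) by auto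
    then consider "x < last U" | "last U < x \<and> x < hd U" | "hd U < x" by linarith
    then show ?thesis
    proof cases
      case 1
      have "last U < hd V" "last U \<in> set U" using U_below_V 3 by auto
      then have "last U < last V" using out_U_outside_V by auto
      then show ?thesis
        using pop_phase_1_23_pop_run[OF runs] 1 3 success_below by simp
    next
      case 2
      then show ?thesis using no_pop fail_inside_run[of U] 3 by simp
    next
      case above: 3
      then have "last U < x" using U_bounds[of "last U"] 3 by simp
      then show ?thesis using no_pop fail_inside_run[of V] fail_above_out success_push_U[OF _ above] 3
        by (cases "last V < x \<and> x < hd V"; cases "out \<noteq> [] \<and> last out < x") auto
    qed
  qed
qed

end

lemma sc_1_23_outcome_sc_state:
  "distinct p \<Longrightarrow>
     sc_1_23_outcome p (fst (sc_state [1,2,3] {1} p [])) (snd (sc_state [1,2,3] {1} p []))"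
proof (induction p rule: rev_induct)
  case Nil
  have "avoids_132_3214_4213 []"
    using contains_132_iff[of "[]"] contains_3214_iff[of "[]"] contains_4213_iff[of "[]"]
    by (simp add: avoids_132_3214_4213_def)
  moreover have "sc_1_23_invariant [] [] [] []"
    by (simp add: sc_1_23_invariant_def two_decreasing_runs_def)
  ultimately show ?case using sc_1_23_outcomeI_success[of "[]" "[]" "[]" "[]"] by simp
next
  case (snoc x p)
  obtain out st where st: "sc_state [1,2,3] {1} p [] = (out, st)" by fastforce
  obtain popped rest where pop: "pop_phase [1,2,3] {1} x st = (popped, rest)" by fastforce
  have st_x: "sc_state [1,2,3] {1} (p @ [x]) [] = (out @ popped, x # rest)"
    using sc_state_snoc[OF st pop] .
  have "sc_1_23_outcome p out st" using snoc st by simp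
  then consider U V where "avoids_132_3214_4213 p" "st = U @ V" "sc_1_23_invariant p out U V"
    | "\<not> avoids_132_3214_4213 p" "contains (out @ st) [2,3,1]"
    unfolding sc_1_23_outcome_def by blast
  then show ?case
  proof cases
    case (1 U V)
    then obtain Q where "p = rev V @ Q @ rev U" "set Q = set out"
      unfolding sc_1_23_invariant_def by blast
    with 1 snoc.prems have step: "sc_1_23_step p out U V Q x"
      by unfold_locales (auto simp: sc_1_23_invariant_def)
    show ?thesis using sc_1_23_step.outcome_snoc[OF step] 1(2) pop st_x by simp
  next
    case 2
    have "st = popped @ rest" using pop_phase_append[of "[1,2,3]" "{1}" x st] pop by simp
    then have "contains ((out @ popped) @ x # rest) [2,3,1]"
      using contains_insert[of "out @ popped" rest] 2(2) by simp
    moreover have "\<not> avoids_132_3214_4213 (p @ [x])"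
      using 2(1) avoids_132_3214_4213_snoc_iff[OF snoc.prems] by blast
    ultimately show ?thesis using st_x sc_1_23_outcomeI_failure by simp
  qed
qed

theorem SC_1_23_contains_231_iff:
  assumes "distinct p"
  shows "contains (SC [1,2,3] {1} p) [2,3,1] \<longleftrightarrow> \<not> avoids_132_3214_4213 p"
proof -
  obtain out st where st: "sc_state [1,2,3] {1} p [] = (out, st)" by fastforce
  then have SC: "SC [1,2,3] {1} p = out @ st"
    unfolding SC_def using sc_aux_eq_sc_state[of "[1,2,3]" "{1}" p "[]"] by simp
  have outcome: "sc_1_23_outcome p out st" using sc_1_23_outcome_sc_state[OF assms] st by simp
  show ?thesis
  proof (cases "avoids_132_3214_4213 p")
    case True
    then obtain U V where "st = U @ V" "sc_1_23_invariant p out U V"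
      using outcome unfolding sc_1_23_outcome_def by blast
    then show ?thesis using True sc_1_23_invariant_no_231[OF _ assms] SC by simp
  next
    case False
    then show ?thesis using outcome SC unfolding sc_1_23_outcome_def by simp
  qed
qed

section \<open>Sortable permutations\<close>

lemma sorted_wrt_less_iff_eq_upt:
  assumes "distinct xs" "set xs = {1..n}"
  shows "sorted_wrt (<) xs \<longleftrightarrow> xs = [1..<n+1]"
proof
  assume "sorted_wrt (<) xs"
  then have "sorted xs" by (simp add: strict_sorted_iff)
  moreover have "set xs = set [1..<n+1]"
    using assms(2) by (simp only: set_upt Suc_eq_plus1[symmetric] atLeastLessThanSuc_atLeastAtMost)
  ultimately show "xs = [1..<n+1]"
    by (rule sorted_distinct_set_unique[OF _ assms(1) sorted_upt distinct_upt])
next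
  assume "xs = [1..<n+1]"
  then show "sorted_wrt (<) xs" by (simp only: sorted_wrt_upt)
qed

lemma SC_1_23_sortable_iff:
  assumes "is_perm p"
  shows "west_s (SC [1,2,3] {1} p) = [1..<length p + 1] \<longleftrightarrow> avoids_132_3214_4213 p"
proof -
  let ?w = "SC [1,2,3] {1} p"
  have "distinct p" using assms by (simp add: is_perm_def)
  have mset_w: "mset ?w = mset p" by (simp add: SC_def mset_sc_aux)
  then have "distinct ?w" using \<open>distinct p\<close> mset_eq_imp_distinct_iff[of ?w p] by simp
  have "mset (west_s ?w) = mset p" using mset_w by (simp add: west_s_def SC_def mset_sc_aux)
  then have "distinct (west_s ?w)" "set (west_s ?w) = {1..length p}"
    using \<open>distinct p\<close> assms mset_eq_imp_distinct_iff[of "west_s ?w" p] mset_eq_setD[of "west_s ?w" p]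
    by (simp_all add: is_perm_def)
  then have "west_s ?w = [1..<length p + 1] \<longleftrightarrow> sorted_wrt (<) (west_s ?w)"
    using sorted_wrt_less_iff_eq_upt by simp
  also have "\<dots> \<longleftrightarrow> avoids_132_3214_4213 p"
    using sorted_west_s_iff[OF \<open>distinct ?w\<close>] SC_1_23_contains_231_iff[OF \<open>distinct p\<close>] by simp
  finally show ?thesis .
qed

lemma mem_Sort_iff:
  "p \<in> Sort tau adj \<longleftrightarrow> is_perm p \<and> west_s (SC tau adj p) = [1..<length p + 1]"
proof
  assume "p \<in> Sort tau adj"
  then obtain n where "p \<in> Sort_n tau adj n" unfolding Sort_def by blast
  then show "is_perm p \<and> west_s (SC tau adj p) = [1..<length p + 1]"
    unfolding Sort_n_def perms_def by auto
next
  assume p: "is_perm p \<and> west_s (SC tau adj p) = [1..<length p + 1]"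
  then have "p \<in> Sort_n tau adj (length p)" unfolding Sort_n_def perms_def by auto
  moreover have "length p \<ge> 1" using p by (cases p) (auto simp: is_perm_def)
  ultimately show "p \<in> Sort tau adj" unfolding Sort_def by auto
qed

lemma Sort_1_23_eq: "Sort pat_1_23 adj_1_23 = {p. is_perm p \<and> avoids_132_3214_4213 p}"
  using mem_Sort_iff SC_1_23_sortable_iff by auto

theorem mainTheorem14:
  shows "perm_class (Sort pat_1_23 adj_1_23)"
  unfolding perm_class_def Sort_1_23_eq using avoids_132_3214_4213_contained by blast

end
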